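(* Let $\mathcal{X}$ be a finite alphabet with $|\mathcal{X}|\ge 2$, let $w(i)>0$ for $i\in\mathcal{X}$ be arbitrary positive weights (not necessarily summing to $1$), and let $a>0$. Run the two-queue method with the exponential combining rule: the first queue initially contains all items of $\mathcal{X}$ arranged from head to tail in order of nondecreasing weight, and the second queue is initially empty. At each step, the two nodes of smallest weight are removed (each being at the head of one of the two queues), say with weights $w(j)$ and $w(k)$; they are made the two children of a new compound node of weight $a\,(w(j)+w(k))$, which is inserted at the tail of the second queue. This is repeated until a single node (the root) remains. Label the two edges from each internal node to its children with $0$ and $1$, and let $c(i)$ be the label sequence from the root to the leaf for item $i$, of length $n(i)$. Then the resulting code is optimal: its length vector $N=\{n(i)\}$ minimizes $L_a(W,N)$ over all binary prefix codes for $\mathcal{X}$.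
   Context: A binary prefix code for an alphabet $\mathcal{X}$ assigns to each $i\in\mathcal{X}$ a codeword $c(i)\in\{0,1\}^*$ such that no codeword is a prefix of another; $n(i)$ denotes the length of $c(i)$. For weights $W=\{w(i)\}$ and $a>0$, $a\neq 1$, the exponential penalty is $L_a(W,N)=\log_a \sum_{i\in\mathcal{X}} w(i)a^{n(i)}$ (for $a>1$ minimizing it means minimizing $\sum_i w(i)a^{n(i)}$, for $a<1$ it means maximizing that sum); for $a=1$ the penalty is taken to be $\sum_i w(i)n(i)$. *)

theory Defs
  imports Complex_Main "HOL-Library.Sublist"
begin

datatype 'a ctree = Leaf 'a | Node "'a ctree" "'a ctree"

fun cweight :: "real \<Rightarrow> ('a \<Rightarrow> real) \<Rightarrow> 'a ctree \<Rightarrow> real" where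
  "cweight a w (Leaf i) = w i"
| "cweight a w (Node l r) = a * (cweight a w l + cweight a w r)"

text \<open>Codewords read off the tree: edge to the first child labelled 0 (False),
  to the second child labelled 1 (True).\<close>
fun codes :: "'a ctree \<Rightarrow> ('a \<times> bool list) list" where
  "codes (Leaf i) = [(i, [])]"
| "codes (Node l r) = map (\<lambda>(i, c). (i, False # c)) (codes l) @ map (\<lambda>(i, c). (i, True # c)) (codes r)"

definition codeword :: "'a ctree \<Rightarrow> 'a \<Rightarrow> bool list" where
  "codeword t i = the (map_of (codes t) i)"

text \<open>A state is (queue 1, queue 2), lists from head to tail.\<close>
inductive two_queue_step :: "real \<Rightarrow> ('a \<Rightarrow> real) \<Rightarrow> 'a ctree list \<times> 'a ctree list
    \<Rightarrow> 'a ctree list \<times> 'a ctree list \<Rightarrow> bool" for a w where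
  both1: "(\<forall>z\<in>set q1 \<union> set q2. cweight a w x \<le> cweight a w z \<and> cweight a w y \<le> cweight a w z)
     \<Longrightarrow> two_queue_step a w (x # y # q1, q2) (q1, q2 @ [Node x y])"
| both2: "(\<forall>z\<in>set q1 \<union> set q2. cweight a w x \<le> cweight a w z \<and> cweight a w y \<le> cweight a w z)
     \<Longrightarrow> two_queue_step a w (q1, x # y # q2) (q1, q2 @ [Node x y])"
| mixed12: "(\<forall>z\<in>set q1 \<union> set q2. cweight a w x \<le> cweight a w z \<and> cweight a w y \<le> cweight a w z)
     \<Longrightarrow> two_queue_step a w (x # q1, y # q2) (q1, q2 @ [Node x y])"
| mixed21: "(\<forall>z\<in>set q1 \<union> set q2. cweight a w x \<le> cweight a w z \<and> cweight a w y \<le> cweight a w z)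
     \<Longrightarrow> two_queue_step a w (y # q1, x # q2) (q1, q2 @ [Node x y])"

definition prefix_code :: "'a set \<Rightarrow> ('a \<Rightarrow> bool list) \<Rightarrow> bool" where
  "prefix_code X c \<longleftrightarrow> (\<forall>i\<in>X. \<forall>j\<in>X. i \<noteq> j \<longrightarrow> \<not> prefix (c i) (c j))"

definition L_pen :: "real \<Rightarrow> ('a \<Rightarrow> real) \<Rightarrow> 'a set \<Rightarrow> ('a \<Rightarrow> nat) \<Rightarrow> real" where
  "L_pen a w X n = (if a = 1 then (\<Sum>i\<in>X. w i * real (n i))
                    else log a (\<Sum>i\<in>X. w i * a ^ n i))"

end

theory Submission
  imports Defs "HOL-Library.Multiset"
begin

text \<open>With \<open>geom_sum a k = 1 + a + \<dots> + a ^ (k - 1)\<close> one has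
  \<open>(a - 1) * (\<Sum>i. w i * geom_sum a (n i)) = (\<Sum>i. w i * a ^ n i) - (\<Sum>i. w i)\<close>, so for every
  \<open>a > 0\<close> minimising \<open>L_a\<close> means minimising the additive cost \<open>\<Sum>i. w i * geom_sum a (n i)\<close>. For a
  code tree this cost is the total merge cost, a merge of \<open>u\<close> and \<open>v\<close> costing \<open>w u + w v\<close>.
  Optimality of the greedy merges is then Huffman's exchange argument, played against depth
  assignments of the current forest that satisfy Kraft's inequality rather than against code trees:
  the two lightest trees can be moved to the two deepest places without increasing the cost, and then
  be merged into one tree hung one level higher; since Kraft sums are dyadic, the new assignment
  still satisfies Kraft's inequality. Prefix codes satisfy Kraft's inequality, which closes the
  argument.\<close>

definition geom_sum :: "real \<Rightarrow> nat \<Rightarrow> real" where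
  "geom_sum a k = (\<Sum>j<k. a ^ j)"

lemma geom_sum_Suc: "geom_sum a (Suc k) = 1 + a * geom_sum a k"
  unfolding geom_sum_def by (simp only: sum.lessThan_Suc_shift) (simp add: sum_distrib_left)

lemma geom_sum_Suc': "geom_sum a (Suc k) = geom_sum a k + a ^ k"
  unfolding geom_sum_def by simp

lemma geom_sum_nonneg: "a \<ge> 0 \<Longrightarrow> geom_sum a k \<ge> 0"
  unfolding geom_sum_def by (simp add: sum_nonneg)

lemma geom_sum_mono: "a \<ge> 0 \<Longrightarrow> m \<le> k \<Longrightarrow> geom_sum a m \<le> geom_sum a k"
  unfolding geom_sum_def by (rule sum_mono2) auto

lemma geom_sum_one: "geom_sum 1 k = real k"
  by (simp add: geom_sum_def)

lemma weighted_geom_sum: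
  "(a - 1) * (\<Sum>i\<in>X. w i * geom_sum a (n i)) = (\<Sum>i\<in>X. w i * a ^ n i) - (\<Sum>i\<in>X. w i)"
proof -
  have "(a - 1) * (w i * geom_sum a k) = w i * a ^ k - w i" for i k
  proof -
    have "(a - 1) * geom_sum a k = a ^ k - 1"
      unfolding geom_sum_def by (rule power_diff_1_eq[symmetric])
    then show ?thesis by (simp add: right_diff_distrib mult.left_commute)
  qed
  then show ?thesis
    by (simp add: sum_distrib_left sum_subtractf)
qed

fun leaves :: "'a ctree \<Rightarrow> 'a list" where
  "leaves (Leaf i) = [i]"
| "leaves (Node l r) = leaves l @ leaves r"

lemma leaves_ne: "leaves T \<noteq> []"
  by (induction T) auto

lemma cweight_nonneg: "a \<ge> 0 \<Longrightarrow> \<forall>i\<in>set (leaves T). w i \<ge> 0 \<Longrightarrow> cweight a w T \<ge> 0"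
  by (induction T) auto

lemma map_of_codes_eq_None_iff: "map_of (codes t) i = None \<longleftrightarrow> i \<notin> set (leaves t)"
proof -
  have "map fst (codes t) = leaves t"
    by (induction t) (auto simp: case_prod_beta comp_def)
  then show ?thesis
    by (metis map_of_eq_None_iff set_map)
qed

lemma codeword_Node:
  assumes "distinct (leaves (Node l r))"
  shows "i \<in> set (leaves l) \<Longrightarrow> codeword (Node l r) i = False # codeword l i"
    and "i \<in> set (leaves r) \<Longrightarrow> codeword (Node l r) i = True # codeword r i"
proof -
  have map_of_prepend: "map_of (map (\<lambda>(i, c). (i, b # c)) (codes u)) = map_option (Cons b) \<circ> map_of (codes u)"
    for b and u :: "'a ctree"
    using map_of_map[of "Cons b" "codes u"] by (simp add: case_prod_beta)
  have disj: "set (leaves l) \<inter> set (leaves r) = {}"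
    using assms by simp
  show "codeword (Node l r) i = False # codeword l i" if "i \<in> set (leaves l)"
    using that disj
    by (cases "map_of (codes l) i") (auto simp: codeword_def map_of_prepend map_add_def map_of_codes_eq_None_iff)
  show "codeword (Node l r) i = True # codeword r i" if "i \<in> set (leaves r)"
    using that disj
    by (cases "map_of (codes r) i") (auto simp: codeword_def map_of_prepend map_add_def map_of_codes_eq_None_iff
        split: option.split)
qed

lemma sum_leaves_Node:
  assumes "distinct (leaves (Node l r))"
  shows "(\<Sum>i\<in>set (leaves (Node l r)). g i (length (codeword (Node l r) i)))
    = (\<Sum>i\<in>set (leaves l). g i (Suc (length (codeword l i))))
      + (\<Sum>i\<in>set (leaves r). g i (Suc (length (codeword r i))))"
proof -
  have "set (leaves l) \<inter> set (leaves r) = {}"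
    using assms by simp
  then have "(\<Sum>i\<in>set (leaves (Node l r)). g i (length (codeword (Node l r) i)))
    = (\<Sum>i\<in>set (leaves l). g i (length (codeword (Node l r) i)))
      + (\<Sum>i\<in>set (leaves r). g i (length (codeword (Node l r) i)))"
    by (simp add: sum.union_disjoint)
  also have "\<dots> = (\<Sum>i\<in>set (leaves l). g i (Suc (length (codeword l i))))
      + (\<Sum>i\<in>set (leaves r). g i (Suc (length (codeword r i))))"
    using codeword_Node[OF assms] by (simp cong: sum.cong)
  finally show ?thesis .
qed

lemma cweight_eq_sum_codeword:
  "distinct (leaves t) \<Longrightarrow> cweight a w t = (\<Sum>i\<in>set (leaves t). w i * a ^ length (codeword t i))"
proof (induction t)
  case (Leaf x)
  then show ?case by (simp add: codeword_def)
next
  case (Node l r)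
  then have "distinct (leaves l)" "distinct (leaves r)"
    by auto
  with Node.IH show ?case
    unfolding sum_leaves_Node[OF Node.prems, of "\<lambda>i k. w i * a ^ k"]
    by (simp add: sum_distrib_left distrib_left mult.left_commute)
qed

fun merge_cost :: "real \<Rightarrow> ('a \<Rightarrow> real) \<Rightarrow> 'a ctree \<Rightarrow> real" where
  "merge_cost a w (Leaf i) = 0"
| "merge_cost a w (Node l r) = merge_cost a w l + merge_cost a w r + cweight a w l + cweight a w r"

lemma merge_cost_eq_sum_codeword:
  "distinct (leaves t) \<Longrightarrow> merge_cost a w t = (\<Sum>i\<in>set (leaves t). w i * geom_sum a (length (codeword t i)))"
proof (induction t)
  case (Leaf x)
  then show ?case by (simp add: codeword_def geom_sum_def)
next
  case (Node l r)
  then have "distinct (leaves l)" "distinct (leaves r)"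
    by auto
  then have "merge_cost a w u + cweight a w u
      = (\<Sum>i\<in>set (leaves u). w i * geom_sum a (Suc (length (codeword u i))))" if "u \<in> {l, r}" for u
    using that Node.IH by (auto simp: cweight_eq_sum_codeword geom_sum_Suc' distrib_left sum.distrib)
  from this[of l] this[of r] show ?case
    unfolding sum_leaves_Node[OF Node.prems, of "\<lambda>i k. w i * geom_sum a k"] by simp
qed

lemma prefix_code_tl:
  assumes "prefix_code X c" and "\<forall>i\<in>X. c i \<noteq> [] \<and> hd (c i) = b"
  shows "prefix_code X (\<lambda>i. tl (c i))"
  unfolding prefix_code_def
proof (intro ballI impI)
  fix i j assume ij: "i \<in> X" "j \<in> X" "i \<noteq> j"
  have cons_tl: "c k = b # tl (c k)" if "k \<in> X" for k
    using assms(2) that by (cases "c k") auto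
  have "prefix (c i) (c j) \<longleftrightarrow> prefix (b # tl (c i)) (b # tl (c j))"
    using cons_tl[OF ij(1)] cons_tl[OF ij(2)] by (rule arg_cong2)
  also have "\<dots> \<longleftrightarrow> prefix (tl (c i)) (tl (c j))"
    by simp
  finally show "\<not> prefix (tl (c i)) (tl (c j))"
    using assms(1) ij unfolding prefix_code_def by simp
qed

lemma kraft_inequality_bounded:
  "finite X \<Longrightarrow> prefix_code X c \<Longrightarrow> \<forall>i\<in>X. length (c i) \<le> N \<Longrightarrow>
    (\<Sum>i\<in>X. (1/2::real) ^ length (c i)) \<le> 1"
proof (induction N arbitrary: X c)
  case 0
  then have "card X \<le> 1"
    unfolding prefix_code_def by (auto simp: card_le_Suc0_iff_eq)
  with "0.prems"(3) show ?case by simp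
next
  case (Suc N)
  show ?case
  proof (cases "\<exists>i\<in>X. c i = []")
    case True
    then obtain i where "i \<in> X" "c i = []" by blast
    with Suc.prems(2) have "X = {i}"
      unfolding prefix_code_def by force
    with \<open>c i = []\<close> show ?thesis by simp
  next
    case False
    define X\<^sub>b where "X\<^sub>b b = {i\<in>X. hd (c i) = b}" for b
    have half: "(\<Sum>i\<in>X\<^sub>b b. (1/2::real) ^ length (c i)) \<le> 1/2" for b
    proof -
      have "prefix_code (X\<^sub>b b) c"
        using Suc.prems(2) unfolding prefix_code_def X\<^sub>b_def by blast
      then have "prefix_code (X\<^sub>b b) (\<lambda>i. tl (c i))"
        by (rule prefix_code_tl[where b = b]) (use False in \<open>simp add: X\<^sub>b_def\<close>)
      moreover have "\<forall>i\<in>X\<^sub>b b. length (tl (c i)) \<le> N"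
        using Suc.prems(3) by (auto simp: X\<^sub>b_def)
      moreover have "finite (X\<^sub>b b)"
        using Suc.prems(1) by (simp add: X\<^sub>b_def)
      ultimately have "(\<Sum>i\<in>X\<^sub>b b. (1/2::real) ^ length (tl (c i))) \<le> 1"
        using Suc.IH by blast
      moreover have "(\<Sum>i\<in>X\<^sub>b b. (1/2::real) ^ length (c i))
          = 1/2 * (\<Sum>i\<in>X\<^sub>b b. (1/2::real) ^ length (tl (c i)))"
        unfolding sum_distrib_left
        by (rule sum.cong) (use False in \<open>auto simp: X\<^sub>b_def neq_Nil_conv\<close>)
      ultimately show ?thesis
        by linarith
    qed
    have "X = X\<^sub>b False \<union> X\<^sub>b True" "X\<^sub>b False \<inter> X\<^sub>b True = {}"
      unfolding X\<^sub>b_def by auto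
    then have "(\<Sum>i\<in>X. (1/2::real) ^ length (c i))
        = (\<Sum>i\<in>X\<^sub>b False. (1/2) ^ length (c i)) + (\<Sum>i\<in>X\<^sub>b True. (1/2) ^ length (c i))"
      using Suc.prems(1) by (metis finite_Un sum.union_disjoint)
    with half[of False] half[of True] show ?thesis by linarith
  qed
qed

theorem kraft_inequality:
  assumes "finite X" and "prefix_code X c"
  shows "(\<Sum>i\<in>X. (1/2::real) ^ length (c i)) \<le> 1"
proof (rule kraft_inequality_bounded[OF assms])
  show "\<forall>i\<in>X. length (c i) \<le> Max ((\<lambda>i. length (c i)) ` X)"
    using assms(1) by simp
qed

text \<open>A forest is never completed to an actual code tree: each tree \<open>T\<close> only gets the depth
  \<open>n T\<close> at which it would hang, and Kraft's condition \<open>kraft_sum F n \<le> 1\<close> stands in for the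
  existence of such a completion, whose merge cost is \<open>forest_cost a w F n\<close>.\<close>
definition forest_cost :: "real \<Rightarrow> ('a \<Rightarrow> real) \<Rightarrow> 'a ctree set \<Rightarrow> ('a ctree \<Rightarrow> nat) \<Rightarrow> real" where
  "forest_cost a w F n = (\<Sum>T\<in>F. merge_cost a w T + cweight a w T * geom_sum a (n T))"

definition kraft_sum :: "'b set \<Rightarrow> ('b \<Rightarrow> nat) \<Rightarrow> real" where
  "kraft_sum F n = (\<Sum>T\<in>F. (1/2) ^ n T)"

lemma sum_remove_pair:
  assumes "finite F" "p \<in> F" "q \<in> F" "p \<noteq> q"
  shows "sum f F = f p + f q + sum f (F - {p, q})"
proof -
  have "sum f F = f p + sum f (F - {p})"
    using assms by (intro sum.remove)
  also have "sum f (F - {p}) = f q + sum f (F - {p} - {q})"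
    using assms by (intro sum.remove) auto
  finally show ?thesis
    by (simp add: Diff_insert2[of F p "{q}"] add.assoc)
qed

lemma kraft_sum_swap:
  assumes "finite F" "p \<in> F" "q \<in> F"
  shows "kraft_sum F (n(p := n q, q := n p)) = kraft_sum F n"
proof (cases "p = q")
  case False
  have "(\<Sum>T\<in>F - {p, q}. (1/2::real) ^ (n(p := n q, q := n p)) T) = (\<Sum>T\<in>F - {p, q}. (1/2) ^ n T)"
    by (rule sum.cong) auto
  with False show ?thesis
    unfolding kraft_sum_def sum_remove_pair[OF assms False] by simp
qed simp

lemma forest_cost_swap_le:
  assumes "finite F" "p \<in> F" "q \<in> F" "a \<ge> 0"
    and "cweight a w p \<le> cweight a w q" and "n p \<le> n q"
  shows "forest_cost a w F (n(p := n q, q := n p)) \<le> forest_cost a w F n"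
proof (cases "p = q")
  case False
  let ?n' = "n(p := n q, q := n p)"
  have rest: "(\<Sum>T\<in>F - {p, q}. merge_cost a w T + cweight a w T * geom_sum a (?n' T))
      = (\<Sum>T\<in>F - {p, q}. merge_cost a w T + cweight a w T * geom_sum a (n T))"
    by (rule sum.cong) auto
  \<comment> \<open>rearrangement: the lighter tree should sit deeper\<close>
  have "0 \<le> (cweight a w q - cweight a w p) * (geom_sum a (n q) - geom_sum a (n p))"
    using assms geom_sum_mono[of a "n p" "n q"] by simp
  with False rest show ?thesis
    unfolding forest_cost_def sum_remove_pair[OF assms(1-3) False] by (simp add: algebra_simps)
qed simp

lemma deepen_lightest:
  assumes "finite F" "x \<in> S" "S \<subseteq> F" "a \<ge> 0"
    and "\<forall>z\<in>S. cweight a w x \<le> cweight a w z"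
  obtains n' where "forest_cost a w F n' \<le> forest_cost a w F n" "kraft_sum F n' = kraft_sum F n"
    and "\<forall>z\<in>S. n' z \<le> n' x" "\<forall>z\<in>S - {x}. n' z \<le> n z" "\<forall>z. z \<notin> S \<longrightarrow> n' z = n z"
proof -
  have "finite S" "S \<noteq> {}"
    using assms finite_subset by auto
  then obtain p where p: "p \<in> S" "Max (n ` S) = n p"
    by (rule obtains_MAX)
  with \<open>finite S\<close> have deepest: "\<forall>z\<in>S. n z \<le> n p"
    by (metis Max_ge finite_imageI imageI)
  let ?n' = "n(x := n p, p := n x)"
  show thesis
  proof
    show "forest_cost a w F ?n' \<le> forest_cost a w F n"
      using assms p deepest by (intro forest_cost_swap_le) auto
    show "kraft_sum F ?n' = kraft_sum F n"
      using assms p by (intro kraft_sum_swap) auto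
    show "\<forall>z\<in>S. ?n' z \<le> ?n' x" "\<forall>z\<in>S - {x}. ?n' z \<le> n z" "\<forall>z. z \<notin> S \<longrightarrow> ?n' z = n z"
      using assms(2) p deepest by auto
  qed
qed

lemma kraft_sum_dyadic_gap:
  assumes "finite R" "\<forall>z\<in>R. n z \<le> m" "kraft_sum R n + (1/2) ^ m < 1"
  shows "kraft_sum R n + 2 * (1/2) ^ m \<le> 1"
proof -
  \<comment> \<open>scaled by \<open>2 ^ m\<close>, the Kraft sum of \<open>R\<close> is an integer\<close>
  define k :: nat where "k = (\<Sum>z\<in>R. 2 ^ (m - n z))"
  have "(1/2::real) ^ n z * 2 ^ m = real (2 ^ (m - n z))" if "z \<in> R" for z
  proof -
    have "(2::real) ^ m = 2 ^ (m - n z) * 2 ^ n z"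
      using assms(2) that by (simp flip: power_add)
    then show ?thesis
      by (simp add: power_one_over)
  qed
  then have scaled: "kraft_sum R n * 2 ^ m = real k"
    unfolding kraft_sum_def k_def sum_distrib_right of_nat_sum by (rule sum.cong[OF refl])
  have "(kraft_sum R n + (1/2) ^ m) * 2 ^ m < 2 ^ m"
    using assms(3) by simp
  then have "real (k + 1) < real (2 ^ m)"
    using scaled by (simp add: distrib_right power_one_over)
  then have "k + 2 \<le> 2 ^ m"
    unfolding of_nat_less_iff by linarith
  then have "real k + 2 \<le> 2 ^ m"
    using of_nat_le_iff[of "k + 2" "2 ^ m", where 'a = real] by simp
  then have "(kraft_sum R n + 2 * (1/2) ^ m) * 2 ^ m \<le> 1 * 2 ^ m"
    using scaled by (simp add: distrib_right power_one_over)
  then show ?thesis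
    by (rule mult_right_le_imp_le) simp
qed

lemma merge_deepest_pair:
  assumes "finite R" "x \<notin> R" "y \<notin> R" "x \<noteq> y" "Node x y \<notin> R" "a \<ge> 0"
    and "cweight a w x \<ge> 0" "cweight a w y \<ge> 0"
    and kraft: "kraft_sum (insert x (insert y R)) n \<le> 1"
    and deepest: "\<forall>z\<in>R. n z \<le> n x \<and> n z \<le> n y"
  obtains n' where "kraft_sum (insert (Node x y) R) n' \<le> 1"
    and "forest_cost a w (insert (Node x y) R) n' \<le> forest_cost a w (insert x (insert y R)) n"
proof -
  define m where "m = min (n x) (n y)"
  have kraft_split: "kraft_sum R n + (1/2) ^ n x + (1/2) ^ n y \<le> 1"
    using kraft assms(1-4) by (simp add: kraft_sum_def)
  have room: "kraft_sum R n + 2 * (1/2) ^ m \<le> 1"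
  proof (cases "n x = n y")
    case True
    with kraft_split show ?thesis by (simp add: m_def)
  next
    case False
    have "(1/2::real) ^ m + (1/2) ^ max (n x) (n y) = (1/2) ^ n x + (1/2) ^ n y"
      by (simp add: m_def min_def max_def)
    moreover have "(1/2::real) ^ max (n x) (n y) > 0"
      by simp
    ultimately have "kraft_sum R n + (1/2) ^ m < 1"
      using kraft_split by linarith
    with assms(1) deepest show ?thesis
      by (intro kraft_sum_dyadic_gap) (auto simp: m_def)
  qed
  moreover have "kraft_sum R n \<ge> 0"
    by (simp add: kraft_sum_def sum_nonneg)
  ultimately obtain k where k: "m = Suc k"
    by (cases m) auto
  define n' where "n' = n(Node x y := k)"
  have on_R: "kraft_sum R n' = kraft_sum R n" "forest_cost a w R n' = forest_cost a w R n"
    using assms(5) unfolding kraft_sum_def forest_cost_def n'_def by (auto intro!: sum.cong)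
  show thesis
  proof
    show "kraft_sum (insert (Node x y) R) n' \<le> 1"
      using room on_R assms(1,5) by (simp add: kraft_sum_def n'_def k)
    have "cweight a w u * geom_sum a m \<le> cweight a w u * geom_sum a (n u)" if "u \<in> {x, y}" for u
      using that assms(6-8) by (intro mult_left_mono geom_sum_mono) (auto simp: m_def)
    from this[of x] this[of y]
    show "forest_cost a w (insert (Node x y) R) n' \<le> forest_cost a w (insert x (insert y R)) n"
      using on_R assms(1-5) unfolding forest_cost_def
      by (simp add: n'_def k geom_sum_Suc algebra_simps)
  qed
qed

lemma greedy_merge_step:
  assumes "finite R" "x \<notin> R" "y \<notin> R" "x \<noteq> y" "Node x y \<notin> R" "a \<ge> 0"
    and "cweight a w x \<ge> 0" "cweight a w y \<ge> 0"
    and lightest: "\<forall>z\<in>R. cweight a w x \<le> cweight a w z \<and> cweight a w y \<le> cweight a w z"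
    and "kraft_sum (insert x (insert y R)) n \<le> 1"
  obtains n' where "kraft_sum (insert (Node x y) R) n' \<le> 1"
    and "forest_cost a w (insert (Node x y) R) n' \<le> forest_cost a w (insert x (insert y R)) n"
proof -
  let ?F = "insert x (insert y R)"
  have "finite ?F"
    using assms(1) by simp
  obtain n\<^sub>1 where n\<^sub>1: "forest_cost a w ?F n\<^sub>1 \<le> forest_cost a w ?F n" "kraft_sum ?F n\<^sub>1 = kraft_sum ?F n"
      "\<forall>z\<in>insert x R. n\<^sub>1 z \<le> n\<^sub>1 x" "\<forall>z\<in>insert x R - {x}. n\<^sub>1 z \<le> n z"
      "\<forall>z. z \<notin> insert x R \<longrightarrow> n\<^sub>1 z = n z"
    using deepen_lightest[of ?F x "insert x R" a w n] \<open>finite ?F\<close> \<open>a \<ge> 0\<close> lightest order_refl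
    by blast
  obtain n\<^sub>2 where n\<^sub>2: "forest_cost a w ?F n\<^sub>2 \<le> forest_cost a w ?F n\<^sub>1" "kraft_sum ?F n\<^sub>2 = kraft_sum ?F n\<^sub>1"
      "\<forall>z\<in>insert y R. n\<^sub>2 z \<le> n\<^sub>2 y" "\<forall>z\<in>insert y R - {y}. n\<^sub>2 z \<le> n\<^sub>1 z"
      "\<forall>z. z \<notin> insert y R \<longrightarrow> n\<^sub>2 z = n\<^sub>1 z"
    using deepen_lightest[of ?F y "insert y R" a w n\<^sub>1] \<open>finite ?F\<close> \<open>a \<ge> 0\<close> lightest order_refl
    by blast
  \<comment> \<open>the second exchange only lowers depths inside \<open>R\<close> and leaves \<open>x\<close> alone\<close>
  have "\<forall>z\<in>R. n\<^sub>2 z \<le> n\<^sub>2 x \<and> n\<^sub>2 z \<le> n\<^sub>2 y"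
    using n\<^sub>1(3) n\<^sub>2(3-5) assms(2-4) by fastforce
  then obtain n' where "kraft_sum (insert (Node x y) R) n' \<le> 1"
      "forest_cost a w (insert (Node x y) R) n' \<le> forest_cost a w ?F n\<^sub>2"
    using merge_deepest_pair[of R x y a w n\<^sub>2] assms(1-8,10) n\<^sub>1(2) n\<^sub>2(2) by auto
  with n\<^sub>1(1) n\<^sub>2(1) show thesis
    by (intro that) auto
qed

definition queued :: "'a ctree list \<times> 'a ctree list \<Rightarrow> 'a ctree list" where
  "queued s = fst s @ snd s"

abbreviation forest_leaves :: "'a ctree list \<Rightarrow> 'a list" where
  "forest_leaves L \<equiv> concat (map leaves L)"

lemma leaves_comp_Leaf [simp]: "leaves \<circ> Leaf = (\<lambda>i. [i])"
  by auto

lemma distinct_of_distinct_forest_leaves: "distinct (forest_leaves L) \<Longrightarrow> distinct L"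
proof -
  assume "distinct (forest_leaves L)"
  moreover have "[] \<notin> set (map leaves L)"
    using leaves_ne by (metis ex_map_conv)
  ultimately show "distinct L"
    by (simp add: distinct_concat_iff distinct_map)
qed

lemma two_queue_step_merges:
  "two_queue_step a w s s' \<Longrightarrow>
    \<exists>x y R. mset (queued s) = mset (x # y # R) \<and> mset (queued s') = mset (Node x y # R)
     \<and> (\<forall>z\<in>set R. cweight a w x \<le> cweight a w z \<and> cweight a w y \<le> cweight a w z)"
proof (induction rule: two_queue_step.induct)
  case (both1 q1 q2 x y)
  then show ?case by (intro exI[of _ x] exI[of _ y] exI[of _ "q1 @ q2"]) (auto simp: queued_def)
next
  case (both2 q1 q2 x y)
  then show ?case by (intro exI[of _ x] exI[of _ y] exI[of _ "q1 @ q2"]) (auto simp: queued_def)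
next
  case (mixed12 q1 q2 x y)
  then show ?case by (intro exI[of _ x] exI[of _ y] exI[of _ "q1 @ q2"]) (auto simp: queued_def)
next
  case (mixed21 q1 q2 x y)
  then show ?case by (intro exI[of _ x] exI[of _ y] exI[of _ "q1 @ q2"]) (auto simp: queued_def)
qed

lemma mset_forest_leaves: "mset (forest_leaves L) = (\<Sum>T\<in>#mset L. mset (leaves T))"
  by (induction L) auto

lemma two_queue_steps_forest_leaves:
  "(two_queue_step a w)\<^sup>*\<^sup>* s s' \<Longrightarrow> mset (forest_leaves (queued s')) = mset (forest_leaves (queued s))"
proof (induction rule: rtranclp_induct)
  case (step s\<^sub>1 s\<^sub>2)
  then obtain x y R where "mset (queued s\<^sub>1) = mset (x # y # R)" "mset (queued s\<^sub>2) = mset (Node x y # R)"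
    using two_queue_step_merges by blast
  then have "mset (forest_leaves (queued s\<^sub>2)) = mset (forest_leaves (queued s\<^sub>1))"
    by (simp add: mset_forest_leaves)
  with step.IH show ?case by simp
qed simp

lemma two_queue_run_merge_cost_le:
  assumes "(two_queue_step a w)\<^sup>*\<^sup>* s ([], [t])" "a \<ge> 0"
    and "distinct (forest_leaves (queued s))" "\<forall>i\<in>set (forest_leaves (queued s)). w i \<ge> 0"
    and "kraft_sum (set (queued s)) n \<le> 1"
  shows "merge_cost a w t \<le> forest_cost a w (set (queued s)) n"
  using assms
proof (induction arbitrary: n rule: converse_rtranclp_induct)
  case base
  then have "cweight a w t * geom_sum a (n t) \<ge> 0"
    by (simp add: queued_def cweight_nonneg geom_sum_nonneg)
  then show ?case
    by (simp add: queued_def forest_cost_def)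
next
  case (step s s\<^sub>1)
  obtain x y R where before: "mset (queued s) = mset (x # y # R)"
    and after: "mset (queued s\<^sub>1) = mset (Node x y # R)"
    and lightest: "\<forall>z\<in>set R. cweight a w x \<le> cweight a w z \<and> cweight a w y \<le> cweight a w z"
    using two_queue_step_merges[OF step.hyps(1)] by blast
  have same_leaves: "mset (forest_leaves (queued s\<^sub>1)) = mset (forest_leaves (queued s))"
    by (rule two_queue_steps_forest_leaves) (use step.hyps(1) in blast)
  have distinct: "distinct (x # y # R)" "distinct (Node x y # R)"
    using before after step.prems(2) same_leaves
    by (metis distinct_of_distinct_forest_leaves mset_eq_imp_distinct_iff)+
  have F: "set (queued s) = insert x (insert y (set R))"
    and F\<^sub>1: "set (queued s\<^sub>1) = insert (Node x y) (set R)"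
    using before after by (metis list.set(2) set_mset_mset)+
  have "cweight a w T \<ge> 0" if "T \<in> set (queued s)" for T
    using that step.prems(3) \<open>a \<ge> 0\<close> by (auto intro: cweight_nonneg)
  then have "cweight a w x \<ge> 0" "cweight a w y \<ge> 0"
    unfolding F by auto
  moreover have "kraft_sum (insert x (insert y (set R))) n \<le> 1"
    using step.prems(4) unfolding F .
  ultimately obtain n' where kraft': "kraft_sum (set (queued s\<^sub>1)) n' \<le> 1"
    and cost': "forest_cost a w (set (queued s\<^sub>1)) n' \<le> forest_cost a w (set (queued s)) n"
    unfolding F F\<^sub>1 using greedy_merge_step[of "set R" x y a w n] distinct \<open>a \<ge> 0\<close> lightest by auto
  have "merge_cost a w t \<le> forest_cost a w (set (queued s\<^sub>1)) n'"
  proof (rule step.IH[OF \<open>a \<ge> 0\<close> _ _ kraft'])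
    show "distinct (forest_leaves (queued s\<^sub>1))"
      using step.prems(2) same_leaves by (metis mset_eq_imp_distinct_iff)
    show "\<forall>i\<in>set (forest_leaves (queued s\<^sub>1)). w i \<ge> 0"
      using step.prems(3) same_leaves by (metis mset_eq_setD)
  qed
  with cost' show ?case by linarith
qed

lemma two_queue_merge_cost_optimal:
  assumes run: "(two_queue_step a w)\<^sup>*\<^sup>* (map Leaf xs, []) ([], [t])"
    and "a \<ge> 0" "distinct xs" "\<forall>i\<in>set xs. w i \<ge> 0"
    and kraft: "(\<Sum>i\<in>set xs. (1/2::real) ^ n i) \<le> 1"
  shows "merge_cost a w t \<le> (\<Sum>i\<in>set xs. w i * geom_sum a (n i))"
proof -
  define d where "d T = (case T of Leaf i \<Rightarrow> n i | Node _ _ \<Rightarrow> 0)" for T :: "'a ctree"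
  have "inj_on Leaf (set xs)"
    by (simp add: inj_on_def)
  then have "kraft_sum (Leaf ` set xs) d = (\<Sum>i\<in>set xs. (1/2) ^ n i)"
    and "forest_cost a w (Leaf ` set xs) d = (\<Sum>i\<in>set xs. w i * geom_sum a (n i))"
    by (simp_all add: kraft_sum_def forest_cost_def sum.reindex d_def)
  moreover have "queued (map Leaf xs, []) = map Leaf xs"
    by (simp add: queued_def)
  ultimately show ?thesis
    using two_queue_run_merge_cost_le[OF run, of d] assms(2-4) kraft by simp
qed

lemma L_pen_le_if_geom_sum_le:
  assumes "finite X" "X \<noteq> {}" "\<forall>i\<in>X. w i > 0" "a > 0"
    and le: "(\<Sum>i\<in>X. w i * geom_sum a (m i)) \<le> (\<Sum>i\<in>X. w i * geom_sum a (n i))"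
  shows "L_pen a w X m \<le> L_pen a w X n"
proof (cases "a = 1")
  case True
  with le show ?thesis
    by (simp add: L_pen_def geom_sum_one)
next
  case a_ne_1: False
  define S where "S k = (\<Sum>i\<in>X. w i * a ^ k i)" for k :: "'a \<Rightarrow> nat"
  define G where "G k = (\<Sum>i\<in>X. w i * geom_sum a (k i))" for k :: "'a \<Rightarrow> nat"
  have S_pos: "S k > 0" for k
    unfolding S_def using assms(1-4) by (intro sum_pos) auto
  have S_eq: "S k = (a - 1) * G k + (\<Sum>i\<in>X. w i)" for k
    using weighted_geom_sum[where a = a and w = w and X = X and n = k] unfolding S_def G_def by linarith
  show ?thesis
  proof (cases "a > 1")
    case True
    then have "(a - 1) * G m \<le> (a - 1) * G n"
      using le unfolding G_def by (intro mult_left_mono) auto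
    then have "S m \<le> S n"
      by (simp add: S_eq)
    with True a_ne_1 S_pos show ?thesis
      by (simp add: L_pen_def S_def)
  next
    case False
    with a_ne_1 assms(4) have "a < 1" "ln a < 0"
      by simp_all
    then have "(a - 1) * G n \<le> (a - 1) * G m"
      using le unfolding G_def by (intro mult_left_mono_neg) auto
    then have "S n \<le> S m"
      by (simp add: S_eq)
    then have "ln (S m) / ln a \<le> ln (S n) / ln a"
      using S_pos \<open>ln a < 0\<close> by (simp add: divide_right_mono_neg)
    with a_ne_1 show ?thesis
      by (simp add: L_pen_def S_def log_def)
  qed
qed

theorem lemma1:
  fixes X :: "'a set" and w :: "'a \<Rightarrow> real" and a :: real
    and xs :: "'a list" and t :: "'a ctree"
  assumes "finite X" and "card X \<ge> 2"
    and "\<forall>i\<in>X. w i > 0" and "a > 0"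
    and "distinct xs" and "set xs = X" and "sorted (map w xs)"
    and "(two_queue_step a w)\<^sup>*\<^sup>* (map Leaf xs, []) ([], [t])"
  shows "\<forall>c'. prefix_code X c' \<longrightarrow>
           L_pen a w X (\<lambda>i. length (codeword t i)) \<le> L_pen a w X (\<lambda>i. length (c' i))"
proof (intro allI impI)
  fix c' assume "prefix_code X c'"
  have "merge_cost a w t \<le> (\<Sum>i\<in>set xs. w i * geom_sum a (length (c' i)))"
  proof (rule two_queue_merge_cost_optimal[OF assms(8)])
    show "a \<ge> 0" "distinct xs" "\<forall>i\<in>set xs. w i \<ge> 0"
      using assms(3-6) by auto
    show "(\<Sum>i\<in>set xs. (1/2::real) ^ length (c' i)) \<le> 1"
      using kraft_inequality[OF assms(1) \<open>prefix_code X c'\<close>] assms(6) by simp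
  qed
  moreover have "mset (leaves t) = mset xs"
    using two_queue_steps_forest_leaves[OF assms(8)] by (simp add: queued_def)
  then have "merge_cost a w t = (\<Sum>i\<in>set xs. w i * geom_sum a (length (codeword t i)))"
    using assms(5) by (metis merge_cost_eq_sum_codeword mset_eq_imp_distinct_iff mset_eq_setD)
  ultimately show "L_pen a w X (\<lambda>i. length (codeword t i)) \<le> L_pen a w X (\<lambda>i. length (c' i))"
    using assms(1-4,6) by (intro L_pen_le_if_geom_sum_le) auto
qed

end
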